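(* In the setting of pair comparisons (every $S_t$ has cardinality $2$, fixed), with true parameter $\theta^\star\in[-b,b]^n$, assume there is $B>0$ with $\left|\frac{d}{dx}\log p_2(x)\right|\le B$ for all $x\in[-2b,2b]$. Then with probability at least $1-2/n$ over the choices, $$\|\nabla(-\ell(\theta^\star))\|_2\le 2B\sqrt{m(\log n+2)}.$$
   Context: Items $N=\{1,\dots,n\}$; observations $(S_t,y_t)$, $t=1,\dots,m$, with $S_t=\{y_t,z_t\}$ and $y_t$ the chosen item. $F$ is a CDF of a zero-mean random variable with density $f$ (so $p_2'$ is even), $p_2(x)=\int_{\mathbb R}F(x+z)f(z)\,dz$. Given the comparison sets, choices are independent with $y_t=i$ with probability $p_2(\theta^\star_i-\theta^\star_j)$ when $S_t=\{i,j\}$. Log-likelihood $\ell(\theta)=\sum_{t=1}^m\log p_2(\theta_{y_t}-\theta_{z_t})$. *)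

theory Defs
  imports "HOL-Probability.Probability"
begin

definition zero_mean_density :: "(real \<Rightarrow> real) \<Rightarrow> bool" where
  "zero_mean_density f \<longleftrightarrow>
     f \<in> borel_measurable borel \<and> (\<forall>x. 0 \<le> f x) \<and>
     integrable lborel f \<and> (LINT z|lborel. f z) = 1 \<and>
     integrable lborel (\<lambda>z. z * f z) \<and> (LINT z|lborel. z * f z) = 0"

definition cdf_of_density :: "(real \<Rightarrow> real) \<Rightarrow> (real \<Rightarrow> real) \<Rightarrow> bool" where
  "cdf_of_density F f \<longleftrightarrow> (\<forall>x. F x = (LINT z:{..x}|lborel. f z))"

definition p2 :: "(real \<Rightarrow> real) \<Rightarrow> (real \<Rightarrow> real) \<Rightarrow> real \<Rightarrow> real" where
  "p2 F f x = (LINT z|lborel. F (x + z) * f z)"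

text \<open>Log-likelihood for chosen items y t and non-chosen items z t, t = 1..m.\<close>
definition loglik :: "(real \<Rightarrow> real) \<Rightarrow> (real \<Rightarrow> real) \<Rightarrow> nat \<Rightarrow> (nat \<Rightarrow> nat) \<Rightarrow> (nat \<Rightarrow> nat)
    \<Rightarrow> (nat \<Rightarrow> real) \<Rightarrow> real" where
  "loglik F f m y z \<theta> = (\<Sum>t\<in>{1..m}. ln (p2 F f (\<theta> (y t) - \<theta> (z t))))"

definition neg_loglik_grad :: "(real \<Rightarrow> real) \<Rightarrow> (real \<Rightarrow> real) \<Rightarrow> nat \<Rightarrow> (nat \<Rightarrow> nat) \<Rightarrow> (nat \<Rightarrow> nat)
    \<Rightarrow> (nat \<Rightarrow> real) \<Rightarrow> nat \<Rightarrow> real" where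
  "neg_loglik_grad F f m y z \<theta> k = deriv (\<lambda>s. - loglik F f m y z (\<theta>(k := s))) (\<theta> k)"

definition neg_loglik_grad_norm :: "nat \<Rightarrow> (real \<Rightarrow> real) \<Rightarrow> (real \<Rightarrow> real) \<Rightarrow> nat \<Rightarrow> (nat \<Rightarrow> nat)
    \<Rightarrow> (nat \<Rightarrow> nat) \<Rightarrow> (nat \<Rightarrow> real) \<Rightarrow> real" where
  "neg_loglik_grad_norm n F f m y z \<theta> = sqrt (\<Sum>k\<in>{1..n}. (neg_loglik_grad F f m y z \<theta> k)\<^sup>2)"

text \<open>Comparison t is the pair {i t, j t}; omega t = True means item i t was chosen.
  The choices are independent with P(i t chosen) = p2(theta(i t) - theta(j t)).\<close>
definition choice_pmf :: "(real \<Rightarrow> real) \<Rightarrow> (real \<Rightarrow> real) \<Rightarrow> (nat \<Rightarrow> real) \<Rightarrow> (nat \<Rightarrow> nat)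
    \<Rightarrow> (nat \<Rightarrow> nat) \<Rightarrow> nat \<Rightarrow> (nat \<Rightarrow> bool) pmf" where
  "choice_pmf F f \<theta> i j m =
     Pi_pmf {1..m} False (\<lambda>t. bernoulli_pmf (p2 F f (\<theta> (i t) - \<theta> (j t))))"

definition chosen :: "(nat \<Rightarrow> nat) \<Rightarrow> (nat \<Rightarrow> nat) \<Rightarrow> (nat \<Rightarrow> bool) \<Rightarrow> nat \<Rightarrow> nat" where
  "chosen i j \<omega> t = (if \<omega> t then i t else j t)"

definition other :: "(nat \<Rightarrow> nat) \<Rightarrow> (nat \<Rightarrow> nat) \<Rightarrow> (nat \<Rightarrow> bool) \<Rightarrow> nat \<Rightarrow> nat" where
  "other i j \<omega> t = (if \<omega> t then j t else i t)"

end

theory Submission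
  imports Defs
begin

text \<open>
  At the true parameter, comparison \<open>t\<close> contributes \<open>\<xi>\<^sub>t (e\<^sub>i - e\<^sub>j)\<close> to the gradient of
  \<open>-\<ell>\<close>, where \<open>\<xi>\<^sub>t\<close> equals \<open>-(ln p2)' x\<close> with probability \<open>p2 x\<close> and \<open>(ln p2)' (-x)\<close>
  otherwise, for \<open>x = \<theta>\<^sub>i - \<theta>\<^sub>j \<in> [-2b, 2b]\<close>. Since \<open>p2 x + p2 (-x) = 1\<close>, the score identity
  makes every \<open>\<xi>\<^sub>t\<close> centred, and \<open>|\<xi>\<^sub>t| \<le> B\<close>. The norm of such a sum of independent
  two-point vectors is controlled by Pinelis' argument: along any line the potential
  \<open>cosh (\<lambda> sqrt (d + \<parallel>x\<parallel>\<^sup>2))\<close> has second derivative at most \<open>\<lambda>\<^sup>2 \<parallel>v\<parallel>\<^sup>2\<close> times itself, so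
  adding one centred increment multiplies its expectation by at most \<open>cosh (\<lambda> B sqrt 2)\<close>.
  Markov's inequality with \<open>d = 1 / \<lambda>\<^sup>2\<close> and \<open>\<lambda> = R / (2 m B\<^sup>2)\<close> bounds the probability
  that the norm exceeds \<open>R = 2 B sqrt (m (ln n + 2))\<close> by \<open>2 / n\<close>.
\<close>

section \<open>Second-order comparison with \<open>cosh\<close>\<close>

lemma sinh_le_mult_cosh:
  fixes y :: real
  assumes "0 \<le> y"
  shows "sinh y \<le> y * cosh y"
proof -
  have "(\<lambda>y. y * cosh y - sinh y) 0 \<le> (\<lambda>y. y * cosh y - sinh y) y"
  proof (rule DERIV_nonneg_imp_nondecreasing[OF assms])
    fix x :: real assume "0 \<le> x" "x \<le> y"
    have "((\<lambda>y. y * cosh y - sinh y) has_real_derivative x * sinh x) (at x)"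
      by (auto intro!: derivative_eq_intros)
    then show "\<exists>d. ((\<lambda>y. y * cosh y - sinh y) has_real_derivative d) (at x) \<and> d \<ge> 0"
      using \<open>0 \<le> x\<close> by fastforce
  qed
  then show ?thesis by simp
qed

lemma cosh_le_exp_half_square: "cosh (x::real) \<le> exp (x\<^sup>2 / 2)"
proof -
  have "cosh y \<le> exp (y\<^sup>2 / 2)" if "y \<ge> 0" for y :: real
  proof -
    have "-(2*y) * (1/2) + ln (1 + (1/2) * (exp (2*y) - 1)) \<le> (2*y)\<^sup>2 / 8"
      by (rule Hoeffdings_lemma_aux) (use that in auto)
    moreover have "1 + (1/2) * (exp (2*y) - 1) = exp y * cosh y"
      by (simp add: cosh_def field_simps exp_add[symmetric] exp_diff[symmetric])
    ultimately have "ln (cosh y) \<le> y\<^sup>2 / 2"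
      by (simp add: ln_mult power2_eq_square)
    then show ?thesis
      by (metis cosh_real_pos exp_le_cancel_iff exp_ln)
  qed
  from this[of x] this[of "-x"] show ?thesis
    by (cases "x \<ge> 0") simp_all
qed

text \<open>Comparison with the solution \<open>cosh (k t)\<close> of \<open>G'' = k\<^sup>2 G\<close>: the quantity
  \<open>G' cosh (k t) - k G sinh (k t)\<close> is nonincreasing and vanishes at \<open>0\<close>, and it is
  \<open>cosh\<^sup>2 (k t)\<close> times the derivative of \<open>G t / cosh (k t)\<close>.\<close>
lemma le_mult_cosh_of_second_deriv_le:
  fixes G G' G'' :: "real \<Rightarrow> real" and k t :: real
  assumes G': "\<And>s. (G has_real_derivative G' s) (at s)"
    and G'': "\<And>s. (G' has_real_derivative G'' s) (at s)"
    and le: "\<And>s. G'' s \<le> k\<^sup>2 * G s" and G'0: "G' 0 = 0" and t: "0 \<le> t"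
  shows "G t \<le> G 0 * cosh (k * t)"
proof -
  define H where "H s = G' s * cosh (k * s) - k * G s * sinh (k * s)" for s
  have H_deriv: "(H has_real_derivative (G'' s - k\<^sup>2 * G s) * cosh (k * s)) (at s)" for s
    unfolding H_def
    by (rule derivative_eq_intros G' G'' refl | simp)+ (simp add: algebra_simps power2_eq_square)
  have H_nonpos: "H s \<le> 0" if "0 \<le> s" for s
  proof -
    have "H s \<le> H 0"
    proof (rule DERIV_nonpos_imp_nonincreasing[OF that])
      fix x
      have "(G'' x - k\<^sup>2 * G x) * cosh (k * x) \<le> 0"
        using le[of x] by (intro mult_nonpos_nonneg) auto
      then show "\<exists>y. (H has_real_derivative y) (at x) \<and> y \<le> 0" using H_deriv by blast
    qed
    then show ?thesis by (simp add: H_def G'0)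
  qed
  define R where "R s = G s / cosh (k * s)" for s
  have R_deriv: "(R has_real_derivative H s / (cosh (k * s))\<^sup>2) (at s)" for s
    unfolding R_def H_def
    by (rule derivative_eq_intros G' refl | simp)+ (simp add: power2_eq_square field_simps)
  have "R t \<le> R 0"
  proof (rule DERIV_nonpos_imp_nonincreasing[OF t])
    fix x :: real assume "0 \<le> x"
    then have "H x / (cosh (k * x))\<^sup>2 \<le> 0" using H_nonpos by (simp add: divide_nonpos_pos)
    then show "\<exists>y. (R has_real_derivative y) (at x) \<and> y \<le> 0" using R_deriv by blast
  qed
  then show ?thesis by (simp add: R_def field_simps)
qed

text \<open>The two-point mean of \<open>\<psi>\<close> at a centred pair is controlled through
  \<open>G t = q \<psi> (t \<alpha>) + (1 - q) \<psi> (t \<beta>)\<close>, for which \<open>G' 0 = 0\<close> is the centring.\<close>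
lemma two_point_mean_le_mult_cosh:
  fixes \<psi> \<psi>' \<psi>'' :: "real \<Rightarrow> real"
  assumes \<psi>': "\<And>s. (\<psi> has_real_derivative \<psi>' s) (at s)"
    and \<psi>'': "\<And>s. (\<psi>' has_real_derivative \<psi>'' s) (at s)"
    and \<psi>''_le: "\<And>s. \<psi>'' s \<le> c * \<psi> s" and \<psi>_nonneg: "\<And>s. 0 \<le> \<psi> s" and c: "0 \<le> c"
    and q: "0 \<le> q" "q \<le> 1" and centred: "q * \<alpha> + (1 - q) * \<beta> = 0"
    and \<alpha>: "\<bar>\<alpha>\<bar> \<le> B" and \<beta>: "\<bar>\<beta>\<bar> \<le> B"
  shows "q * \<psi> \<alpha> + (1 - q) * \<psi> \<beta> \<le> \<psi> 0 * cosh (B * sqrt c)"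
proof -
  define G where "G t = q * \<psi> (t * \<alpha>) + (1 - q) * \<psi> (t * \<beta>)" for t
  define G' where "G' t = q * (\<psi>' (t * \<alpha>) * \<alpha>) + (1 - q) * (\<psi>' (t * \<beta>) * \<beta>)" for t
  define G'' where "G'' t = q * (\<psi>'' (t * \<alpha>) * \<alpha> * \<alpha>) + (1 - q) * (\<psi>'' (t * \<beta>) * \<beta> * \<beta>)" for t
  have G_deriv: "(G has_real_derivative G' t) (at t)" for t
    unfolding G_def G'_def by (rule derivative_eq_intros DERIV_chain2[OF \<psi>'] refl | simp)+
  have G'_deriv: "(G' has_real_derivative G'' t) (at t)" for t
    unfolding G'_def G''_def by (rule derivative_eq_intros DERIV_chain2[OF \<psi>''] refl | simp)+
  have scaled_le: "\<psi>'' (t * x) * x * x \<le> (B * sqrt c)\<^sup>2 * \<psi> (t * x)" if "\<bar>x\<bar> \<le> B" for t x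
  proof -
    have "\<psi>'' (t * x) * x * x \<le> c * \<psi> (t * x) * x\<^sup>2"
      using mult_right_mono[OF \<psi>''_le zero_le_power2] by (simp add: power2_eq_square mult.assoc)
    also have "\<dots> \<le> c * \<psi> (t * x) * B\<^sup>2"
      using power_mono[OF that abs_ge_zero, of 2] c \<psi>_nonneg by (intro mult_left_mono) auto
    finally show ?thesis using c by (simp add: power_mult_distrib mult_ac)
  qed
  have "G'' t \<le> (B * sqrt c)\<^sup>2 * G t" for t
  proof -
    have "G'' t \<le> q * ((B * sqrt c)\<^sup>2 * \<psi> (t * \<alpha>)) + (1 - q) * ((B * sqrt c)\<^sup>2 * \<psi> (t * \<beta>))"
      unfolding G''_def using q by (intro add_mono mult_left_mono scaled_le \<alpha> \<beta>) auto
    then show ?thesis by (simp add: G_def algebra_simps)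
  qed
  moreover have "G' 0 = \<psi>' 0 * (q * \<alpha> + (1 - q) * \<beta>)"
    by (simp add: G'_def algebra_simps)
  ultimately have "G 1 \<le> G 0 * cosh (B * sqrt c * 1)"
    using centred by (intro le_mult_cosh_of_second_deriv_le[OF G_deriv G'_deriv]) auto
  then show ?thesis by (simp add: G_def algebra_simps)
qed

text \<open>Uses \<open>sinh y \<le> y cosh y\<close> on the \<open>r''\<close>-term of \<open>(cosh \<circ> (\<lambda> r))''\<close>.\<close>
lemma cosh_comp_second_deriv_le:
  fixes r r' r'' :: "real \<Rightarrow> real"
  assumes r': "\<And>s. (r has_real_derivative r' s) (at s)"
    and r'': "\<And>s. (r' has_real_derivative r'' s) (at s)"
    and r_nonneg: "\<And>s. 0 \<le> r s" and r''_nonneg: "\<And>s. 0 \<le> r'' s"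
    and curv: "\<And>s. (r' s)\<^sup>2 + r s * r'' s = W" and lam: "0 \<le> lam"
  obtains \<psi>' \<psi>'' where "\<And>s. ((\<lambda>s. cosh (lam * r s)) has_real_derivative \<psi>' s) (at s)"
    "\<And>s. (\<psi>' has_real_derivative \<psi>'' s) (at s)"
    "\<And>s. \<psi>'' s \<le> lam\<^sup>2 * W * cosh (lam * r s)"
proof
  show "((\<lambda>s. cosh (lam * r s)) has_real_derivative lam * sinh (lam * r s) * r' s) (at s)" for s
    by (rule derivative_eq_intros r' refl | simp)+
  show "((\<lambda>s. lam * sinh (lam * r s) * r' s) has_real_derivative
          lam\<^sup>2 * cosh (lam * r s) * (r' s)\<^sup>2 + lam * sinh (lam * r s) * r'' s) (at s)" for s
    by (rule derivative_eq_intros r' r'' refl | simp)+ (simp add: power2_eq_square algebra_simps)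
  fix s
  have "sinh (lam * r s) \<le> lam * r s * cosh (lam * r s)"
    using lam r_nonneg by (intro sinh_le_mult_cosh) simp
  then have "lam * sinh (lam * r s) * r'' s \<le> lam * (lam * r s * cosh (lam * r s)) * r'' s"
    using lam r''_nonneg by (intro mult_right_mono mult_left_mono) auto
  then show "lam\<^sup>2 * cosh (lam * r s) * (r' s)\<^sup>2 + lam * sinh (lam * r s) * r'' s
      \<le> lam\<^sup>2 * W * cosh (lam * r s)"
    unfolding curv[of s, symmetric] by (simp add: power2_eq_square algebra_simps)
qed

text \<open>The identity \<open>r'\<^sup>2 + r r'' = W\<close> is \<open>(r\<^sup>2)'' = 2 W\<close>, and \<open>r'' \<ge> 0\<close> because
  \<open>r'' = (a W - C\<^sup>2) / r\<^sup>3\<close>.\<close>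
lemma sqrt_quadratic_derivs:
  fixes a C W :: real
  assumes W: "0 < W" and discr: "C\<^sup>2 < a * W"
  defines "r \<equiv> \<lambda>s. sqrt (a + 2 * C * s + W * s\<^sup>2)"
  obtains r' r'' where "\<And>s. 0 < r s" "\<And>s. (r has_real_derivative r' s) (at s)"
    "\<And>s. (r' has_real_derivative r'' s) (at s)"
    "\<And>s. 0 \<le> r'' s" "\<And>s. (r' s)\<^sup>2 + r s * r'' s = W"
proof
  define Q where "Q s = a + 2 * C * s + W * s\<^sup>2" for s
  have Q_sq: "W * Q s = (C + W * s)\<^sup>2 + (a * W - C\<^sup>2)" for s
    by (simp add: Q_def algebra_simps power2_eq_square)
  have Q_pos: "0 < Q s" for s
    using Q_sq[of s] W discr by (smt (verit) zero_le_power2 zero_less_mult_iff)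
  show r_pos: "0 < r s" for s
    using Q_pos[of s] by (simp add: r_def Q_def)
  have r_sq: "r s * r s = Q s" for s
    using Q_pos[of s] by (simp add: r_def Q_def)
  have r_eq: "r = (\<lambda>s. sqrt (Q s))"
    unfolding r_def Q_def ..
  have Q': "(Q has_real_derivative 2 * (C + W * s)) (at s)" for s
    unfolding Q_def by (auto intro!: derivative_eq_intros simp: algebra_simps)
  show r': "(r has_real_derivative (C + W * s) / r s) (at s)" for s
  proof -
    have "((\<lambda>s. sqrt (Q s)) has_real_derivative inverse (sqrt (Q s)) / 2 * (2 * (C + W * s))) (at s)"
      by (rule DERIV_chain2[OF DERIV_real_sqrt[OF Q_pos] Q'])
    moreover have "inverse (sqrt (Q s)) / 2 * (2 * (C + W * s)) = (C + W * s) / sqrt (Q s)"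
      using Q_pos[of s] by (simp add: field_simps)
    ultimately show ?thesis
      unfolding r_eq by metis
  qed
  show "((\<lambda>s. (C + W * s) / r s) has_real_derivative (a * W - C\<^sup>2) / (r s ^ 3)) (at s)" for s
  proof -
    have "(a * W - C\<^sup>2) / (r s ^ 3) = (W * r s - (C + W * s) * ((C + W * s) / r s)) / (r s * r s)"
      using r_pos[of s] Q_sq[of s] by (simp add: r_sq field_simps power2_eq_square power3_eq_cube)
    also have "((\<lambda>s. (C + W * s) / r s) has_real_derivative \<dots>) (at s)"
      using r_pos[of s] by (auto intro!: derivative_eq_intros r')
    finally show ?thesis .
  qed
  show "0 \<le> (a * W - C\<^sup>2) / (r s ^ 3)" for s
    using discr r_pos[of s] by simp
  show "((C + W * s) / r s)\<^sup>2 + r s * ((a * W - C\<^sup>2) / r s ^ 3) = W" for s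
  proof -
    have "((C + W * s) / r s)\<^sup>2 + r s * ((a * W - C\<^sup>2) / r s ^ 3)
        = ((C + W * s)\<^sup>2 + (a * W - C\<^sup>2)) / (r s * r s)"
      using r_pos[of s] by (simp add: field_simps power2_eq_square power3_eq_cube)
    also have "\<dots> = W"
      using Q_pos[of s] by (simp flip: Q_sq add: r_sq)
    finally show ?thesis .
  qed
qed

section \<open>Pinelis' inequality for sums of two-point vectors\<close>

text \<open>Pinelis' smoothed potential \<open>cosh (\<lambda> sqrt (d + \<parallel>x\<parallel>\<^sup>2))\<close>; the offset \<open>d > 0\<close> keeps
  the square root smooth along every line.\<close>
definition cosh_norm :: "real \<Rightarrow> real \<Rightarrow> 'a set \<Rightarrow> ('a \<Rightarrow> real) \<Rightarrow> real" where
  "cosh_norm lam d K x = cosh (lam * sqrt (d + (\<Sum>k\<in>K. (x k)\<^sup>2)))"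

lemma cosh_norm_pos: "0 < cosh_norm lam d K x"
  by (simp add: cosh_norm_def)

lemma cosh_norm_two_point_le:
  fixes u v :: "'a \<Rightarrow> real"
  assumes d: "0 < d" and lam: "0 \<le> lam" and v: "(\<Sum>k\<in>K. (v k)\<^sup>2) = W" and W: "0 < W"
    and q: "0 \<le> q" "q \<le> 1" and centred: "q * \<alpha> + (1 - q) * \<beta> = 0"
    and \<alpha>: "\<bar>\<alpha>\<bar> \<le> B" and \<beta>: "\<bar>\<beta>\<bar> \<le> B"
  shows "q * cosh_norm lam d K (\<lambda>k. u k + \<alpha> * v k) + (1 - q) * cosh_norm lam d K (\<lambda>k. u k + \<beta> * v k)
         \<le> cosh_norm lam d K u * cosh (lam * B * sqrt W)"
proof -
  define a where "a = d + (\<Sum>k\<in>K. (u k)\<^sup>2)"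
  define C where "C = (\<Sum>k\<in>K. u k * v k)"
  have expand: "d + (\<Sum>k\<in>K. (u k + s * v k)\<^sup>2) = a + 2 * C * s + W * s\<^sup>2" for s
  proof -
    have "(\<Sum>k\<in>K. (u k + s * v k)\<^sup>2) = (\<Sum>k\<in>K. (u k)\<^sup>2 + 2 * s * (u k * v k) + s\<^sup>2 * (v k)\<^sup>2)"
      by (rule sum.cong) (simp_all add: power2_eq_square algebra_simps)
    then show ?thesis
      by (simp add: a_def C_def v[symmetric] sum.distrib sum_distrib_left algebra_simps)
  qed
  have "C\<^sup>2 \<le> (\<Sum>k\<in>K. (u k)\<^sup>2) * W"
    unfolding C_def v[symmetric] by (rule Cauchy_Schwarz_ineq_sum)
  with mult_pos_pos[OF d W] have discr: "C\<^sup>2 < a * W"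
    by (simp add: a_def distrib_right)
  obtain r' r'' where r_pos: "\<And>s. 0 < sqrt (a + 2 * C * s + W * s\<^sup>2)"
    and r':
      "\<And>s. ((\<lambda>s. sqrt (a + 2 * C * s + W * s\<^sup>2)) has_real_derivative r' s) (at s)"
    and r'': "\<And>s. (r' has_real_derivative r'' s) (at s)"
    and r''_nonneg: "\<And>s. 0 \<le> r'' s"
    and curv: "\<And>s. (r' s)\<^sup>2 + sqrt (a + 2 * C * s + W * s\<^sup>2) * r'' s = W"
    using sqrt_quadratic_derivs[OF W discr] by blast
  obtain \<psi>' \<psi>'' where
      "\<And>s. ((\<lambda>s. cosh (lam * sqrt (a + 2 * C * s + W * s\<^sup>2))) has_real_derivative \<psi>' s) (at s)"
      "\<And>s. (\<psi>' has_real_derivative \<psi>'' s) (at s)"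
      "\<And>s. \<psi>'' s \<le> lam\<^sup>2 * W * cosh (lam * sqrt (a + 2 * C * s + W * s\<^sup>2))"
    using cosh_comp_second_deriv_le[OF r' r'' less_imp_le[OF r_pos] r''_nonneg curv lam] by blast
  from two_point_mean_le_mult_cosh[OF this, of q \<alpha> \<beta> B] q centred \<alpha> \<beta> W lam
  have "q * cosh (lam * sqrt (a + 2 * C * \<alpha> + W * \<alpha>\<^sup>2))
        + (1 - q) * cosh (lam * sqrt (a + 2 * C * \<beta> + W * \<beta>\<^sup>2))
      \<le> cosh (lam * sqrt a) * cosh (B * sqrt (lam\<^sup>2 * W))"
    by simp
  then show ?thesis
    using lam W by (simp add: cosh_norm_def expand a_def real_sqrt_mult mult_ac)
qed

lemma ennreal_convex_combination_le:
  fixes q x y z :: real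
  assumes "0 \<le> q" "q \<le> 1" "0 \<le> x" "0 \<le> y" "q * x + (1 - q) * y \<le> z"
  shows "ennreal q * ennreal x + ennreal (1 - q) * ennreal y \<le> ennreal z"
  using assms by (metis diff_ge_0_iff_ge ennreal_leI ennreal_mult ennreal_plus mult_nonneg_nonneg)

lemma ennreal_cosh_norm_two_point_le:
  fixes u v :: "'a \<Rightarrow> real"
  assumes "0 < d" "0 \<le> lam" "(\<Sum>k\<in>K. (v k)\<^sup>2) = W" "0 < W"
    and q: "0 \<le> q" "q \<le> 1" and "q * \<alpha> + (1 - q) * \<beta> = 0" "\<bar>\<alpha>\<bar> \<le> B" "\<bar>\<beta>\<bar> \<le> B"
  shows "ennreal q * cosh_norm lam d K (\<lambda>k. u k + \<alpha> * v k)
           + ennreal (1 - q) * cosh_norm lam d K (\<lambda>k. u k + \<beta> * v k)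
         \<le> ennreal (cosh_norm lam d K u) * ennreal (cosh (lam * B * sqrt W))"
proof -
  have "ennreal q * cosh_norm lam d K (\<lambda>k. u k + \<alpha> * v k)
          + ennreal (1 - q) * cosh_norm lam d K (\<lambda>k. u k + \<beta> * v k)
        \<le> ennreal (cosh_norm lam d K u * cosh (lam * B * sqrt W))"
    using cosh_norm_two_point_le[OF assms] q
    by (intro ennreal_convex_combination_le) (auto intro: less_imp_le cosh_norm_pos)
  then show ?thesis
    by (simp add: ennreal_mult'')
qed

lemma nn_integral_Pi_pmf_insert_bernoulli:
  assumes "finite I" "s \<notin> I" "0 \<le> q s" "q s \<le> 1"
  shows "(\<integral>\<^sup>+\<omega>. G \<omega> \<partial>Pi_pmf (insert s I) False (\<lambda>t. bernoulli_pmf (q t)))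
    = ennreal (q s) * (\<integral>\<^sup>+g. G (g(s := True)) \<partial>Pi_pmf I False (\<lambda>t. bernoulli_pmf (q t)))
      + ennreal (1 - q s) * (\<integral>\<^sup>+g. G (g(s := False)) \<partial>Pi_pmf I False (\<lambda>t. bernoulli_pmf (q t)))"
  using assms
  by (simp add: Pi_pmf_insert nn_integral_pair_pmf' case_prod_beta nn_integral_measure_pmf_support[where A = UNIV]
      UNIV_bool ac_simps)

text \<open>Conditioning on the last coordinate multiplies the expectation of the potential by at most
  \<open>cosh (\<lambda> B sqrt W)\<close>: this is the supermartingale step of Pinelis' inequality.\<close>
lemma nn_integral_cosh_norm_sum_le:
  fixes I :: "'i set" and K :: "'a set" and v :: "'i \<Rightarrow> 'a \<Rightarrow> real"
  assumes "finite I" and d: "0 < d" and lam: "0 \<le> lam" and W: "0 < W"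
    and q: "\<And>t. t \<in> I \<Longrightarrow> 0 \<le> q t \<and> q t \<le> 1"
    and centred: "\<And>t. t \<in> I \<Longrightarrow> q t * \<alpha> t + (1 - q t) * \<beta> t = 0"
    and bounded: "\<And>t. t \<in> I \<Longrightarrow> \<bar>\<alpha> t\<bar> \<le> B \<and> \<bar>\<beta> t\<bar> \<le> B"
    and v: "\<And>t. t \<in> I \<Longrightarrow> (\<Sum>k\<in>K. (v t k)\<^sup>2) = W"
  shows "(\<integral>\<^sup>+\<omega>. cosh_norm lam d K (\<lambda>k. \<Sum>t\<in>I. (if \<omega> t then \<alpha> t else \<beta> t) * v t k)
            \<partial>Pi_pmf I False (\<lambda>t. bernoulli_pmf (q t)))
         \<le> ennreal (cosh (lam * sqrt d) * cosh (lam * B * sqrt W) ^ card I)"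
  using assms(1) q centred bounded v
proof (induction I rule: finite_induct)
  case empty
  then show ?case by (simp add: cosh_norm_def)
next
  case (insert s I)
  let ?P = "Pi_pmf I False (\<lambda>t. bernoulli_pmf (q t))"
  let ?H = "\<lambda>\<omega> k. \<Sum>t\<in>I. (if \<omega> t then \<alpha> t else \<beta> t) * v t k"
  define G where
    "G \<omega> = ennreal (cosh_norm lam d K (\<lambda>k. \<Sum>t\<in>insert s I. (if \<omega> t then \<alpha> t else \<beta> t) * v t k))"
    for \<omega>
  define c where "c = cosh (lam * B * sqrt W)"
  have q_s: "0 \<le> q s" "q s \<le> 1" using insert.prems by auto
  have step: "(\<lambda>k. \<Sum>t\<in>insert s I. (if (g(s := y)) t then \<alpha> t else \<beta> t) * v t k)
      = (\<lambda>k. ?H g k + (if y then \<alpha> s else \<beta> s) * v s k)" for g y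
    using insert.hyps by (intro ext) (auto intro!: sum.cong)
  have s_facts: "(\<Sum>k\<in>K. (v s k)\<^sup>2) = W" "q s * \<alpha> s + (1 - q s) * \<beta> s = 0"
      "\<bar>\<alpha> s\<bar> \<le> B" "\<bar>\<beta> s\<bar> \<le> B"
    using insert.prems by auto
  have two_point: "ennreal (q s) * cosh_norm lam d K (\<lambda>k. ?H \<omega> k + \<alpha> s * v s k)
      + ennreal (1 - q s) * cosh_norm lam d K (\<lambda>k. ?H \<omega> k + \<beta> s * v s k)
      \<le> ennreal (cosh_norm lam d K (?H \<omega>)) * ennreal c" for \<omega>
    unfolding c_def by (rule ennreal_cosh_norm_two_point_le[OF d lam s_facts(1) W q_s s_facts(2-4)])
  have "(\<integral>\<^sup>+\<omega>. G \<omega> \<partial>Pi_pmf (insert s I) False (\<lambda>t. bernoulli_pmf (q t)))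
      = ennreal (q s) * (\<integral>\<^sup>+g. G (g(s := True)) \<partial>?P)
      + ennreal (1 - q s) * (\<integral>\<^sup>+g. G (g(s := False)) \<partial>?P)"
    using insert.hyps q_s by (rule nn_integral_Pi_pmf_insert_bernoulli)
  also have "\<dots> = (\<integral>\<^sup>+\<omega>. ennreal (q s) * cosh_norm lam d K (\<lambda>k. ?H \<omega> k + \<alpha> s * v s k)
          + ennreal (1 - q s) * cosh_norm lam d K (\<lambda>k. ?H \<omega> k + \<beta> s * v s k) \<partial>?P)"
    unfolding G_def step by (simp add: nn_integral_add nn_integral_cmult)
  also have "\<dots> \<le> (\<integral>\<^sup>+\<omega>. ennreal (cosh_norm lam d K (?H \<omega>)) * ennreal c \<partial>?P)"
    by (intro nn_integral_mono two_point)
  also have "\<dots> = (\<integral>\<^sup>+\<omega>. cosh_norm lam d K (?H \<omega>) \<partial>?P) * ennreal c"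
    by (simp add: nn_integral_multc)
  also have "\<dots> \<le> ennreal (cosh (lam * sqrt d) * c ^ card I) * ennreal c"
    using insert.IH insert.prems by (intro mult_right_mono) (auto simp: c_def)
  also have "\<dots> = ennreal (cosh (lam * sqrt d) * c ^ card (insert s I))"
    using insert.hyps by (simp add: c_def ennreal_mult[symmetric] algebra_simps)
  finally show ?case by (simp add: G_def c_def)
qed

lemma prob_norm_sum_gt_le:
  fixes I :: "'i set" and K :: "'a set" and v :: "'i \<Rightarrow> 'a \<Rightarrow> real"
  assumes "finite I" and d: "0 < d" and lam: "0 \<le> lam" and W: "0 < W" and r: "0 \<le> r"
    and q: "\<And>t. t \<in> I \<Longrightarrow> 0 \<le> q t \<and> q t \<le> 1"
    and centred: "\<And>t. t \<in> I \<Longrightarrow> q t * \<alpha> t + (1 - q t) * \<beta> t = 0"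
    and bounded: "\<And>t. t \<in> I \<Longrightarrow> \<bar>\<alpha> t\<bar> \<le> B \<and> \<bar>\<beta> t\<bar> \<le> B"
    and v: "\<And>t. t \<in> I \<Longrightarrow> (\<Sum>k\<in>K. (v t k)\<^sup>2) = W"
  shows "measure_pmf.prob (Pi_pmf I False (\<lambda>t. bernoulli_pmf (q t)))
           {\<omega>. r < sqrt (\<Sum>k\<in>K. (\<Sum>t\<in>I. (if \<omega> t then \<alpha> t else \<beta> t) * v t k)\<^sup>2)}
         \<le> cosh (lam * sqrt d) * cosh (lam * B * sqrt W) ^ card I / cosh (lam * r)"
proof -
  let ?P = "Pi_pmf I False (\<lambda>t. bernoulli_pmf (q t))"
  let ?S = "\<lambda>\<omega> k. \<Sum>t\<in>I. (if \<omega> t then \<alpha> t else \<beta> t) * v t k"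
  define c where "c = cosh (lam * r)"
  define E where "E = {\<omega>. c \<le> cosh_norm lam d K (?S \<omega>)}"
  have c_pos: "0 < c" by (simp add: c_def)
  have subset: "{\<omega>. r < sqrt (\<Sum>k\<in>K. (?S \<omega> k)\<^sup>2)} \<subseteq> E"
  proof
    fix \<omega> assume "\<omega> \<in> {\<omega>. r < sqrt (\<Sum>k\<in>K. (?S \<omega> k)\<^sup>2)}"
    then have "r < sqrt (\<Sum>k\<in>K. (?S \<omega> k)\<^sup>2)" by simp
    also have "\<dots> \<le> sqrt (d + (\<Sum>k\<in>K. (?S \<omega> k)\<^sup>2))"
      using d by simp
    finally have "r \<le> sqrt (d + (\<Sum>k\<in>K. (?S \<omega> k)\<^sup>2))"
      by simp
    then have "lam * r \<le> lam * sqrt (d + (\<Sum>k\<in>K. (?S \<omega> k)\<^sup>2))"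
      using lam by (rule mult_left_mono)
    then show "\<omega> \<in> E"
      using lam r d
      by (subst (asm) cosh_real_nonneg_le_iff[symmetric]) (auto simp: E_def c_def cosh_norm_def sum_nonneg)
  qed
  have "ennreal (c * measure_pmf.prob ?P E) = (\<integral>\<^sup>+\<omega>. ennreal c * indicator E \<omega> \<partial>?P)"
    using c_pos by (simp add: ennreal_mult measure_pmf.emeasure_eq_measure[symmetric]
        nn_integral_cmult_indicator)
  also have "\<dots> \<le> (\<integral>\<^sup>+\<omega>. cosh_norm lam d K (?S \<omega>) \<partial>?P)"
    by (intro nn_integral_mono) (auto simp: E_def ennreal_leI split: split_indicator)
  also have "\<dots> \<le> ennreal (cosh (lam * sqrt d) * cosh (lam * B * sqrt W) ^ card I)"
    by (rule nn_integral_cosh_norm_sum_le[OF assms(1) d lam W q centred bounded v])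
  finally have "c * measure_pmf.prob ?P E \<le> cosh (lam * sqrt d) * cosh (lam * B * sqrt W) ^ card I"
    by (simp add: ennreal_le_iff)
  then have "measure_pmf.prob ?P E \<le> cosh (lam * sqrt d) * cosh (lam * B * sqrt W) ^ card I / c"
    using c_pos by (simp add: pos_le_divide_eq mult.commute)
  moreover have "measure_pmf.prob ?P {\<omega>. r < sqrt (\<Sum>k\<in>K. (?S \<omega> k)\<^sup>2)} \<le> measure_pmf.prob ?P E"
    using subset by (rule measure_pmf.finite_measure_mono) simp
  ultimately show ?thesis
    unfolding c_def by linarith
qed

lemma cosh_tail_bound_le_two_div:
  fixes B :: real and m n :: nat
  assumes B: "0 < B" and m: "1 \<le> m" and n: "1 \<le> n"
  defines "R \<equiv> 2 * B * sqrt (real m * (ln (real n) + 2))"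
  defines "lam \<equiv> R / (2 * real m * B\<^sup>2)"
  shows "cosh 1 * cosh (lam * B * sqrt 2) ^ m / cosh (lam * R) \<le> 2 / real n"
proof -
  have ln_n: "0 \<le> ln (real n)"
    using n by simp
  have R_sq: "R\<^sup>2 = 4 * B\<^sup>2 * real m * (ln (real n) + 2)"
    unfolding R_def using ln_n by (simp add: power_mult_distrib)
  have exponent: "real m * (lam\<^sup>2 * B\<^sup>2) = ln (real n) + 2"
    using R_sq m B unfolding lam_def by (simp add: power_divide field_simps power2_eq_square)
  have lam_R: "lam * R = 2 * (ln (real n) + 2)"
    using R_sq m B by (simp add: lam_def field_simps power2_eq_square)
  define E where "E = exp (ln (real n) + 2)"
  have E: "E = real n * exp 2"
    using n by (simp add: E_def exp_add)
  have "cosh 1 * cosh (lam * B * sqrt 2) ^ m \<le> exp 2 * E"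
  proof (rule mult_mono)
    show "cosh (1::real) \<le> exp 2"
    proof -
      have "cosh (1::real) \<le> exp 1"
        unfolding cosh_def using exp_le_cancel_iff[of "-1" 1] by simp
      also have "\<dots> \<le> exp 2" by simp
      finally show ?thesis .
    qed
    have "cosh (lam * B * sqrt 2) ^ m \<le> exp ((lam * B * sqrt 2)\<^sup>2 / 2) ^ m"
      by (intro power_mono cosh_le_exp_half_square) simp
    also have "\<dots> = exp (real m * (lam\<^sup>2 * B\<^sup>2))"
      by (simp add: power_mult_distrib exp_of_nat_mult[symmetric])
    finally show "cosh (lam * B * sqrt 2) ^ m \<le> E"
      by (simp add: E_def exponent)
  qed simp_all
  moreover have "E * E / 2 \<le> cosh (lam * R)"
    unfolding E_def lam_R by (simp add: cosh_def exp_add[symmetric])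
  ultimately have "cosh 1 * cosh (lam * B * sqrt 2) ^ m / cosh (lam * R) \<le> exp 2 * E / (E * E / 2)"
    by (intro frac_le) (auto simp: E_def)
  also have "\<dots> = 2 / real n"
    using n by (simp add: E field_simps power2_eq_square)
  finally show ?thesis .
qed

lemma prob_norm_sum_gt_le_two_div:
  fixes I :: "'i set" and K :: "'a set" and v :: "'i \<Rightarrow> 'a \<Rightarrow> real" and m n :: nat
  assumes I: "card I = m" "0 < m" and n: "1 \<le> n" and B: "0 < B"
    and q: "\<And>t. t \<in> I \<Longrightarrow> 0 \<le> q t \<and> q t \<le> 1"
    and centred: "\<And>t. t \<in> I \<Longrightarrow> q t * \<alpha> t + (1 - q t) * \<beta> t = 0"
    and bounded: "\<And>t. t \<in> I \<Longrightarrow> \<bar>\<alpha> t\<bar> \<le> B \<and> \<bar>\<beta> t\<bar> \<le> B"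
    and v: "\<And>t. t \<in> I \<Longrightarrow> (\<Sum>k\<in>K. (v t k)\<^sup>2) = 2"
  shows "measure_pmf.prob (Pi_pmf I False (\<lambda>t. bernoulli_pmf (q t)))
           {\<omega>. 2 * B * sqrt (real m * (ln (real n) + 2))
              < sqrt (\<Sum>k\<in>K. (\<Sum>t\<in>I. (if \<omega> t then \<alpha> t else \<beta> t) * v t k)\<^sup>2)}
         \<le> 2 / real n"
proof -
  define R where "R = 2 * B * sqrt (real m * (ln (real n) + 2))"
  define lam where "lam = R / (2 * real m * B\<^sup>2)"
  have "finite I" using I card.infinite by force
  have R: "0 < R" unfolding R_def using B n I by (auto intro!: mult_pos_pos add_nonneg_pos)
  have lam: "0 < lam" unfolding lam_def using R B I by simp
  have "measure_pmf.prob (Pi_pmf I False (\<lambda>t. bernoulli_pmf (q t)))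
           {\<omega>. R < sqrt (\<Sum>k\<in>K. (\<Sum>t\<in>I. (if \<omega> t then \<alpha> t else \<beta> t) * v t k)\<^sup>2)}
      \<le> cosh (lam * sqrt (1 / lam\<^sup>2)) * cosh (lam * B * sqrt 2) ^ card I / cosh (lam * R)"
    using lam R by (intro prob_norm_sum_gt_le[OF \<open>finite I\<close> _ _ _ _ q centred bounded v]) auto
  also have "card I = m"
    by (rule I(1))
  also have "lam * sqrt (1 / lam\<^sup>2) = 1"
    using lam by (simp add: real_sqrt_divide)
  also have "cosh 1 * cosh (lam * B * sqrt 2) ^ m / cosh (lam * R) \<le> 2 / real n"
    unfolding lam_def R_def using B I n by (intro cosh_tail_bound_le_two_div) auto
  finally show ?thesis unfolding R_def .
qed

section \<open>The pair comparison model\<close>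

text \<open>With the junk value \<open>ln 0 = 0\<close>, both log-probabilities attain their maximum \<open>0\<close> wherever
  one outcome is certain; otherwise differentiate \<open>exp (ln P) + exp (ln Q) = 1\<close>.\<close>
lemma complementary_ln_derivs:
  fixes P Q :: "real \<Rightarrow> real"
  assumes P: "\<And>y. 0 \<le> P y" and Q: "\<And>y. 0 \<le> Q y" and sum: "\<And>y. P y + Q y = 1"
    and a: "((\<lambda>y. ln (P y)) has_real_derivative a) (at x)"
    and b: "((\<lambda>y. ln (Q y)) has_real_derivative b) (at x)"
  shows "P x * a + Q x * b = 0"
proof (cases "P x = 0 \<or> Q x = 0")
  case True
  have "ln (P y) \<le> 0" "ln (Q y) \<le> 0" for y
    using P[of y] Q[of y] sum[of y] by (auto simp: le_less)
  moreover have "ln (P x) = 0" "ln (Q x) = 0"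
    using True sum[of x] by auto
  ultimately have "a = 0" "b = 0"
    by (auto intro: DERIV_local_max[OF a zero_less_one] DERIV_local_max[OF b zero_less_one])
  then show ?thesis by simp
next
  case False
  then have "ln (P x) < 0" "ln (Q x) < 0"
    using P[of x] Q[of x] sum[of x] by auto
  moreover have "((\<lambda>y. ln (P y)) \<longlongrightarrow> ln (P x)) (nhds x)" "((\<lambda>y. ln (Q y)) \<longlongrightarrow> ln (Q x)) (nhds x)"
    using DERIV_isCont[OF a] DERIV_isCont[OF b] tendsto_at_iff_tendsto_nhds[of "\<lambda>y. ln (P y)" x]
      tendsto_at_iff_tendsto_nhds[of "\<lambda>y. ln (Q y)" x]
    by (simp_all add: isCont_def)
  ultimately have "eventually (\<lambda>y. ln (P y) < 0 \<and> ln (Q y) < 0) (nhds x)"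
    by (intro eventually_conj) (auto elim: order_tendstoD(2))
  then have ev: "eventually (\<lambda>y. exp (ln (P y)) + exp (ln (Q y)) = 1) (nhds x)"
  proof eventually_elim
    case (elim y)
    then have "P y \<noteq> 0" "Q y \<noteq> 0" by auto
    then show ?case using P[of y] Q[of y] sum[of y] by simp
  qed
  have "exp (ln (P x)) = P x" "exp (ln (Q x)) = Q x"
    using False P[of x] Q[of x] by (auto simp: le_less)
  then have "((\<lambda>y. exp (ln (P y)) + exp (ln (Q y))) has_real_derivative P x * a + Q x * b) (at x)"
    by (metis (no_types) DERIV_add DERIV_chain2 DERIV_exp a b)
  then have "((\<lambda>_. 1) has_real_derivative P x * a + Q x * b) (at x)"
    using DERIV_cong_ev[OF refl ev refl] by blast
  then show ?thesis
    using DERIV_const DERIV_unique by blast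
qed

locale density_cdf =
  fixes F f :: "real \<Rightarrow> real"
  assumes density_nonneg: "\<And>x. 0 \<le> f x"
    and density_integrable: "integrable lborel f"
    and density_integral: "(LINT z|lborel. f z) = 1"
    and cdf: "cdf_of_density F f"
begin

lemma density_measurable[measurable]: "f \<in> borel_measurable borel"
  using borel_measurable_integrable[OF density_integrable] by simp

lemma cdf_eq: "F y = (LINT w|lborel. indicator {..y} w * f w)"
  using cdf by (simp add: cdf_of_density_def set_lebesgue_integral_def)

lemma integrable_indicator_density: "integrable lborel (\<lambda>w. indicator {..y} w * f w)"
  using integrable_mult_indicator[OF _ density_integrable, of "{..y}"] by simp

lemma cdf_nonneg: "0 \<le> F y"
  unfolding cdf_eq by (rule integral_nonneg_AE) (auto simp: density_nonneg split: split_indicator)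

lemma cdf_le_1: "F y \<le> 1"
proof -
  have "F y \<le> (LINT w|lborel. f w)"
    unfolding cdf_eq
    by (rule integral_mono[OF integrable_indicator_density density_integrable])
       (auto simp: density_nonneg split: split_indicator)
  then show ?thesis using density_integral by simp
qed

lemma mono_cdf: "mono F"
  unfolding mono_def cdf_eq
  by (auto intro!: integral_mono integrable_indicator_density simp: density_nonneg split: split_indicator)

lemma cdf_measurable[measurable]: "F \<in> borel_measurable borel"
  by (rule borel_measurable_mono[OF mono_cdf])

lemma nn_integral_density: "(\<integral>\<^sup>+w. f w \<partial>lborel) = 1"
  using nn_integral_eq_integral[OF density_integrable] density_integral density_nonneg by simp

lemma p2_nonneg: "0 \<le> p2 F f x"
  unfolding p2_def by (rule integral_nonneg_AE) (auto simp: cdf_nonneg density_nonneg)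

text \<open>\<open>p2 x\<close> is the probability of \<open>W \<le> x + Z\<close> for independent \<open>W, Z\<close> with density \<open>f\<close>.\<close>
lemma p2_eq_nn_integral:
  "ennreal (p2 F f x) = (\<integral>\<^sup>+z. \<integral>\<^sup>+w. ennreal (if w \<le> x + z then f w * f z else 0) \<partial>lborel \<partial>lborel)"
proof -
  have integrable: "integrable lborel (\<lambda>z. F (x + z) * f z)"
    by (rule Bochner_Integration.integrable_bound[OF density_integrable])
       (auto simp: abs_mult cdf_nonneg cdf_le_1 density_nonneg intro!: mult_left_le_one_le)
  have "ennreal (p2 F f x) = (\<integral>\<^sup>+z. ennreal (F (x + z) * f z) \<partial>lborel)"
    unfolding p2_def
    by (rule nn_integral_eq_integral[OF integrable, symmetric]) (auto simp: cdf_nonneg density_nonneg)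
  also have "\<dots> = (\<integral>\<^sup>+z. \<integral>\<^sup>+w. ennreal (if w \<le> x + z then f w * f z else 0) \<partial>lborel \<partial>lborel)"
  proof (rule nn_integral_cong)
    fix z
    have "ennreal (F (x + z)) = (\<integral>\<^sup>+w. ennreal (indicator {..x + z} w * f w) \<partial>lborel)"
      unfolding cdf_eq
      by (rule nn_integral_eq_integral[OF integrable_indicator_density, symmetric])
         (auto simp: density_nonneg)
    then have "ennreal (F (x + z)) * ennreal (f z)
        = (\<integral>\<^sup>+w. ennreal (indicator {..x + z} w * f w) * ennreal (f z) \<partial>lborel)"
      by (simp add: nn_integral_multc)
    also have "\<dots> = (\<integral>\<^sup>+w. ennreal (if w \<le> x + z then f w * f z else 0) \<partial>lborel)"
      by (intro nn_integral_cong) (simp add: ennreal_mult density_nonneg split: split_indicator)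
    finally show "ennreal (F (x + z) * f z) = \<dots>"
      by (simp add: ennreal_mult cdf_nonneg density_nonneg)
  qed
  finally show ?thesis .
qed

text \<open>Swapping \<open>W\<close> and \<open>Z\<close>: \<open>p2 (-x)\<close> is the probability of \<open>W \<ge> x + Z\<close>, and \<open>W = x + Z\<close> is a
  null event.\<close>
lemma p2_add_p2_uminus: "p2 F f x + p2 F f (- x) = 1"
proof -
  have "ennreal (p2 F f (- x))
      = (\<integral>\<^sup>+w. \<integral>\<^sup>+z. ennreal (if w \<le> - x + z then f w * f z else 0) \<partial>lborel \<partial>lborel)"
    unfolding p2_eq_nn_integral by (rule lborel_pair.Fubini') measurable
  also have "\<dots> = (\<integral>\<^sup>+z. \<integral>\<^sup>+w. ennreal (if x + z \<le> w then f w * f z else 0) \<partial>lborel \<partial>lborel)"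
    by (intro nn_integral_cong) (auto simp: mult.commute)
  finally have "ennreal (p2 F f x) + ennreal (p2 F f (- x))
      = (\<integral>\<^sup>+z. (\<integral>\<^sup>+w. ennreal (if w \<le> x + z then f w * f z else 0) \<partial>lborel)
            + (\<integral>\<^sup>+w. ennreal (if x + z \<le> w then f w * f z else 0) \<partial>lborel) \<partial>lborel)"
    unfolding p2_eq_nn_integral[of x] by (subst nn_integral_add) auto
  also have "\<dots> = (\<integral>\<^sup>+z. \<integral>\<^sup>+w. ennreal (f w) * ennreal (f z) \<partial>lborel \<partial>lborel)"
  proof (intro nn_integral_cong)
    fix z
    have "AE w in lborel. ennreal (if w \<le> x + z then f w * f z else 0)
        + ennreal (if x + z \<le> w then f w * f z else 0) = ennreal (f w) * ennreal (f z)"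
      using AE_lborel_singleton[of "x + z"]
      by eventually_elim (auto simp: ennreal_mult density_nonneg)
    then show "(\<integral>\<^sup>+w. ennreal (if w \<le> x + z then f w * f z else 0) \<partial>lborel)
        + (\<integral>\<^sup>+w. ennreal (if x + z \<le> w then f w * f z else 0) \<partial>lborel)
        = (\<integral>\<^sup>+w. ennreal (f w) * ennreal (f z) \<partial>lborel)"
      by (subst nn_integral_add[symmetric]) (auto intro: nn_integral_cong_AE)
  qed
  also have "\<dots> = 1"
    by (simp add: nn_integral_multc nn_integral_density)
  finally show ?thesis
    using p2_nonneg[of x] p2_nonneg[of "- x"] by (simp flip: ennreal_plus)
qed

lemma p2_le_1: "p2 F f x \<le> 1"
  using p2_add_p2_uminus[of x] p2_nonneg[of "- x"] by simp

lemma p2_score_centred: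
  assumes "(\<lambda>u. ln (p2 F f u)) differentiable (at x)"
    and "(\<lambda>u. ln (p2 F f u)) differentiable (at (- x))"
  shows "p2 F f x * deriv (\<lambda>u. ln (p2 F f u)) x = (1 - p2 F f x) * deriv (\<lambda>u. ln (p2 F f u)) (- x)"
proof -
  let ?L = "\<lambda>u. ln (p2 F f u)"
  have "((\<lambda>y. ?L (- y)) has_real_derivative deriv ?L (- x) * - 1) (at x)"
    using assms(2) by (intro DERIV_chain2[of ?L]) (auto intro!: derivative_eq_intros simp: DERIV_deriv_iff_real_differentiable)
  with assms(1) have "p2 F f x * deriv ?L x + p2 F f (- x) * - deriv ?L (- x) = 0"
    by (intro complementary_ln_derivs[OF p2_nonneg p2_nonneg p2_add_p2_uminus])
       (auto simp: DERIV_deriv_iff_real_differentiable)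
  moreover have "p2 F f (- x) = 1 - p2 F f x"
    using p2_add_p2_uminus[of x] by simp
  ultimately show ?thesis
    by simp
qed

end

lemma has_real_derivative_pair_difference:
  fixes L :: "real \<Rightarrow> real" and \<theta> :: "'a \<Rightarrow> real"
  assumes "y \<noteq> z" and L: "(L has_real_derivative D) (at (\<theta> y - \<theta> z))"
  shows "((\<lambda>s. L ((\<theta>(k := s)) y - (\<theta>(k := s)) z)) has_real_derivative
           D * ((if y = k then 1 else 0) - (if z = k then 1 else 0))) (at (\<theta> k))"
proof -
  define e :: real where "e = (if y = k then 1 else 0) - (if z = k then 1 else 0)"
  have affine: "(\<theta>(k := s)) y - (\<theta>(k := s)) z = \<theta> y - \<theta> z + (s - \<theta> k) * e" for s
    using assms(1) by (auto simp: e_def)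
  have "((\<lambda>s. \<theta> y - \<theta> z + (s - \<theta> k) * e) has_real_derivative e) (at (\<theta> k))"
    by (auto intro!: derivative_eq_intros)
  moreover have "(L has_real_derivative D) (at (\<theta> y - \<theta> z + (\<theta> k - \<theta> k) * e))"
    using L by simp
  ultimately show ?thesis
    unfolding affine e_def[symmetric] by (rule DERIV_chain2[rotated])
qed

lemma neg_loglik_grad_eq:
  assumes "\<And>t. t \<in> {1..m} \<Longrightarrow> y t \<noteq> z t"
    and "\<And>t. t \<in> {1..m} \<Longrightarrow> (\<lambda>u. ln (p2 F f u)) differentiable (at (\<theta> (y t) - \<theta> (z t)))"
  shows "neg_loglik_grad F f m y z \<theta> k
    = - (\<Sum>t\<in>{1..m}. deriv (\<lambda>u. ln (p2 F f u)) (\<theta> (y t) - \<theta> (z t))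
                      * ((if y t = k then 1 else 0) - (if z t = k then 1 else 0)))"
  unfolding neg_loglik_grad_def loglik_def using assms
  by (intro DERIV_imp_deriv DERIV_minus DERIV_sum has_real_derivative_pair_difference)
     (auto simp: DERIV_deriv_iff_real_differentiable)

lemma neg_loglik_grad_choice:
  fixes i j :: "nat \<Rightarrow> nat"
  assumes "\<And>t. t \<in> {1..m} \<Longrightarrow> i t \<noteq> j t"
    and "\<And>t. t \<in> {1..m} \<Longrightarrow> (\<lambda>u. ln (p2 F f u)) differentiable (at (\<theta> (i t) - \<theta> (j t)))"
    and "\<And>t. t \<in> {1..m} \<Longrightarrow> (\<lambda>u. ln (p2 F f u)) differentiable (at (\<theta> (j t) - \<theta> (i t)))"
  shows "neg_loglik_grad F f m (chosen i j \<omega>) (other i j \<omega>) \<theta> k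
    = (\<Sum>t\<in>{1..m}. (if \<omega> t then - deriv (\<lambda>u. ln (p2 F f u)) (\<theta> (i t) - \<theta> (j t))
                     else deriv (\<lambda>u. ln (p2 F f u)) (\<theta> (j t) - \<theta> (i t)))
                   * ((if i t = k then 1 else 0) - (if j t = k then 1 else 0)))"
proof -
  have "j t \<noteq> i t" if "t \<in> {1..m}" for t
    using assms(1)[OF that] by simp
  then show ?thesis
    using assms
    by (subst neg_loglik_grad_eq) (auto simp: chosen_def other_def sum_negf[symmetric] intro!: sum.cong)
qed

lemma (in density_cdf) prob_neg_loglik_grad_norm_gt_le:
  fixes i j :: "nat \<Rightarrow> nat" and \<theta> :: "nat \<Rightarrow> real" and n m :: nat
  assumes pairs: "\<And>t. t \<in> {1..m} \<Longrightarrow> i t \<in> {1..n} \<and> j t \<in> {1..n} \<and> i t \<noteq> j t"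
    and m: "0 < m" and B: "0 < B"
    and score: "\<And>t x. t \<in> {1..m} \<Longrightarrow> x \<in> {\<theta> (i t) - \<theta> (j t), \<theta> (j t) - \<theta> (i t)} \<Longrightarrow>
      (\<lambda>u. ln (p2 F f u)) differentiable (at x) \<and> \<bar>deriv (\<lambda>u. ln (p2 F f u)) x\<bar> \<le> B"
  shows "measure_pmf.prob (choice_pmf F f \<theta> i j m)
           {\<omega>. 2 * B * sqrt (real m * (ln (real n) + 2))
              < neg_loglik_grad_norm n F f m (chosen i j \<omega>) (other i j \<omega>) \<theta>}
         \<le> 2 / real n"
proof -
  define L where "L = (\<lambda>u. ln (p2 F f u))"
  define \<alpha> where "\<alpha> t = - deriv L (\<theta> (i t) - \<theta> (j t))" for t
  define \<beta> where "\<beta> t = deriv L (\<theta> (j t) - \<theta> (i t))" for t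
  define v where "v t k = (if i t = k then 1 else 0) - (if j t = k then 1 else (0::real))" for t k
  have "neg_loglik_grad F f m (chosen i j \<omega>) (other i j \<omega>) \<theta> k
      = (\<Sum>t\<in>{1..m}. (if \<omega> t then \<alpha> t else \<beta> t) * v t k)" for \<omega> k
    unfolding \<alpha>_def \<beta>_def v_def L_def
    by (rule neg_loglik_grad_choice) (use pairs score in auto)
  then have norm_eq: "neg_loglik_grad_norm n F f m (chosen i j \<omega>) (other i j \<omega>) \<theta>
      = sqrt (\<Sum>k\<in>{1..n}. (\<Sum>t\<in>{1..m}. (if \<omega> t then \<alpha> t else \<beta> t) * v t k)\<^sup>2)" for \<omega>
    by (simp add: neg_loglik_grad_norm_def)
  show ?thesis
    unfolding choice_pmf_def norm_eq
  proof (rule prob_norm_sum_gt_le_two_div)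
    show "1 \<le> n" using m pairs by fastforce
    fix t assume t: "t \<in> {1..m}"
    then show "0 \<le> p2 F f (\<theta> (i t) - \<theta> (j t)) \<and> p2 F f (\<theta> (i t) - \<theta> (j t)) \<le> 1"
      by (simp add: p2_nonneg p2_le_1)
    show "p2 F f (\<theta> (i t) - \<theta> (j t)) * \<alpha> t + (1 - p2 F f (\<theta> (i t) - \<theta> (j t))) * \<beta> t = 0"
      using p2_score_centred[of "\<theta> (i t) - \<theta> (j t)"] score[OF t]
      by (simp add: L_def \<alpha>_def \<beta>_def)
    show "\<bar>\<alpha> t\<bar> \<le> B \<and> \<bar>\<beta> t\<bar> \<le> B"
      using score[OF t] by (simp add: L_def \<alpha>_def \<beta>_def)
    show "(\<Sum>k\<in>{1..n}. (v t k)\<^sup>2) = 2"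
      using pairs[OF t] by (simp add: v_def power2_eq_square if_distrib if_distribR sum.If_cases)
  qed (use m B in auto)
qed

theorem mainTheorem4:
  fixes n m :: nat and b B :: real and \<theta> :: "nat \<Rightarrow> real"
    and F f :: "real \<Rightarrow> real" and i j :: "nat \<Rightarrow> nat"
  assumes dens: "zero_mean_density f"
    and cdf: "cdf_of_density F f"
    and pairs: "\<forall>t\<in>{1..m}. i t \<in> {1..n} \<and> j t \<in> {1..n} \<and> i t \<noteq> j t"
    and theta: "\<forall>k\<in>{1..n}. \<theta> k \<in> {-b..b}"
    and Bpos: "B > 0"
    and Bbound: "\<forall>x\<in>{-2*b..2*b}. (\<lambda>u. ln (p2 F f u)) differentiable (at x) \<and>
                    \<bar>deriv (\<lambda>u. ln (p2 F f u)) x\<bar> \<le> B"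
  shows "measure_pmf.prob (choice_pmf F f \<theta> i j m)
           {\<omega>. neg_loglik_grad_norm n F f m (chosen i j \<omega>) (other i j \<omega>) \<theta>
                \<le> 2 * B * sqrt (real m * (ln (real n) + 2))}
         \<ge> 1 - 2 / real n"
proof (cases "m = 0")
  case True
  then show ?thesis by (simp add: neg_loglik_grad_norm_def neg_loglik_grad_def loglik_def)
next
  case False
  interpret density_cdf F f
    using dens cdf by unfold_locales (auto simp: zero_mean_density_def)
  let ?R = "2 * B * sqrt (real m * (ln (real n) + 2))"
  let ?N = "\<lambda>\<omega>. neg_loglik_grad_norm n F f m (chosen i j \<omega>) (other i j \<omega>) \<theta>"
  have "\<theta> (i t) - \<theta> (j t) \<in> {-2*b..2*b} \<and> \<theta> (j t) - \<theta> (i t) \<in> {-2*b..2*b}" if "t \<in> {1..m}" for t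
  proof -
    have "\<theta> (i t) \<in> {-b..b}" "\<theta> (j t) \<in> {-b..b}"
      using pairs theta that by auto
    then show ?thesis by auto
  qed
  then have "measure_pmf.prob (choice_pmf F f \<theta> i j m) {\<omega>. ?R < ?N \<omega>} \<le> 2 / real n"
    using pairs Bbound False Bpos by (intro prob_neg_loglik_grad_norm_gt_le) auto
  moreover have "{\<omega>. ?N \<omega> \<le> ?R} = space (choice_pmf F f \<theta> i j m) - {\<omega>. ?R < ?N \<omega>}"
    by auto
  ultimately show ?thesis
    using measure_pmf.prob_compl[of _ "choice_pmf F f \<theta> i j m"] by simp
qed

end
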